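(* Let $m\geq n$ and $k$ be integers with $2\leq k\leq n$. Then $$ext(m,n,(k-1)K_2)+2\leq rb(K_{m,n},kK_2)\leq ext(m,n,kK_2)+1.$$
   Context: $kK_2$ denotes a matching with $k$ edges, and $K_{m,n}$ the complete bipartite graph with parts of sizes $m$ and $n$. For a graph $H$, $ext(m,n,H)$ is the maximum number of edges of a bipartite graph with bipartition $A\cup B$, $|A|=m$, $|B|=n$, containing no subgraph isomorphic to $H$. An edge-coloring contains a rainbow copy of $H$ if there is a subgraph isomorphic to $H$ whose edges have pairwise distinct colors. $rb(G,H)$ is the minimum number $r$ such that every edge-coloring of $G$ using at least $r$ colors contains a rainbow copy of $H$ (equivalently, one plus the maximum number of colors in an edge-coloring of $G$ with no rainbow $H$). *)

theory Defs
  imports Main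
begin

definition Kmn_edges :: "nat \<Rightarrow> nat \<Rightarrow> (nat \<times> nat) set" where
  "Kmn_edges m n = {..<m} \<times> {..<n}"

definition is_matching :: "(nat \<times> nat) set \<Rightarrow> bool" where
  "is_matching M \<longleftrightarrow> (\<forall>e\<in>M. \<forall>e'\<in>M. e \<noteq> e' \<longrightarrow> fst e \<noteq> fst e' \<and> snd e \<noteq> snd e')"

definition has_kmatching :: "nat \<Rightarrow> (nat \<times> nat) set \<Rightarrow> bool" where
  "has_kmatching k F \<longleftrightarrow> (\<exists>M\<subseteq>F. card M = k \<and> is_matching M)"

definition ext_matching :: "nat \<Rightarrow> nat \<Rightarrow> nat \<Rightarrow> nat" where
  "ext_matching m n k = Max {card F | F. F \<subseteq> Kmn_edges m n \<and> \<not> has_kmatching k F}"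

definition has_rainbow_kmatching :: "nat \<Rightarrow> nat \<Rightarrow> nat \<Rightarrow> (nat \<times> nat \<Rightarrow> nat) \<Rightarrow> bool" where
  "has_rainbow_kmatching m n k c \<longleftrightarrow>
     (\<exists>M\<subseteq>Kmn_edges m n. card M = k \<and> is_matching M \<and> inj_on c M)"

definition rb_matching :: "nat \<Rightarrow> nat \<Rightarrow> nat \<Rightarrow> nat" where
  "rb_matching m n k = (LEAST r. \<forall>c :: nat \<times> nat \<Rightarrow> nat.
      r \<le> card (c ` Kmn_edges m n) \<longrightarrow> has_rainbow_kmatching m n k c)"

end

theory Submission
  imports Defs "HOL-Library.Nat_Bijection"
begin

(* Upper bound: with more than ext(m,n,kK_2) colours, one edge per colour spans a graph too large
   to avoid kK_2, and a kK_2 in it is rainbow.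
   Lower bound: take an extremal graph F without (k-1)K_2, give each of its edges its own colour
   and all remaining edges one further colour.  A rainbow kK_2 uses at most one edge outside F,
   so F would contain a (k-1)K_2. *)

lemma finite_Kmn_edges: "finite (Kmn_edges m n)"
  unfolding Kmn_edges_def by simp

lemma finite_ext_matching_candidates:
  "finite {card F | F. F \<subseteq> Kmn_edges m n \<and> \<not> has_kmatching k F}"
  by (rule finite_subset[where B = "card ` Pow (Kmn_edges m n)"]) (auto simp: finite_Kmn_edges)

lemma card_le_ext_matching:
  assumes "F \<subseteq> Kmn_edges m n" and "\<not> has_kmatching k F"
  shows "card F \<le> ext_matching m n k"
  unfolding ext_matching_def
  using assms by (intro Max_ge[OF finite_ext_matching_candidates]) auto

lemma ext_matching_attained:
  assumes "1 \<le> k"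
  obtains F where "F \<subseteq> Kmn_edges m n" and "\<not> has_kmatching k F" and "card F = ext_matching m n k"
proof -
  have "\<not> has_kmatching k {}"
    using assms unfolding has_kmatching_def by auto
  then have "ext_matching m n k \<in> {card F | F. F \<subseteq> Kmn_edges m n \<and> \<not> has_kmatching k F}"
    unfolding ext_matching_def by (intro Max_in[OF finite_ext_matching_candidates]) auto
  then show thesis
    using that by auto
qed

lemma has_kmatching_Kmn_edges:
  assumes "k \<le> m" and "k \<le> n"
  shows "has_kmatching k (Kmn_edges m n)"
proof -
  let ?M = "(\<lambda>i. (i, i)) ` {..<k}"
  have "card ?M = k"
    by (subst card_image) (auto simp: inj_on_def)
  moreover have "?M \<subseteq> Kmn_edges m n"
    using assms unfolding Kmn_edges_def by auto
  moreover have "is_matching ?M"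
    unfolding is_matching_def by auto
  ultimately show ?thesis
    unfolding has_kmatching_def by blast
qed

lemma is_matching_subset: "is_matching M \<Longrightarrow> N \<subseteq> M \<Longrightarrow> is_matching N"
  unfolding is_matching_def by blast

lemma has_rainbow_kmatching_if_many_colours:
  assumes "ext_matching m n k < card (c ` Kmn_edges m n)"
  shows "has_rainbow_kmatching m n k c"
proof -
  obtain F where F: "F \<subseteq> Kmn_edges m n" "c ` F = c ` Kmn_edges m n" "inj_on c F"
    by (metis subset_image_inj subset_refl)
  have "card F = card (c ` Kmn_edges m n)"
    using F by (metis card_image)
  then have "has_kmatching k F"
    using assms card_le_ext_matching[OF F(1)] by fastforce
  then obtain M where "M \<subseteq> F" "card M = k" "is_matching M"
    unfolding has_kmatching_def by blast
  moreover from \<open>M \<subseteq> F\<close> F have "M \<subseteq> Kmn_edges m n" and "inj_on c M"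
    by (auto intro: inj_on_subset)
  ultimately show ?thesis
    unfolding has_rainbow_kmatching_def by blast
qed

definition single_colour_outside :: "(nat \<times> nat) set \<Rightarrow> nat \<times> nat \<Rightarrow> nat" where
  "single_colour_outside F e = (if e \<in> F then Suc (prod_encode e) else 0)"

lemma inj_on_single_colour_outside: "inj_on (single_colour_outside F) F"
  by (rule inj_onI) (simp add: single_colour_outside_def)

lemma card_image_single_colour_outside:
  assumes "finite E" and "F \<subseteq> E" and "F \<noteq> E"
  shows "card (single_colour_outside F ` E) = card F + 1"
proof -
  have "single_colour_outside F ` E = insert 0 (single_colour_outside F ` F)"
    using assms(2,3) unfolding single_colour_outside_def by force
  moreover have "0 \<notin> single_colour_outside F ` F"
    unfolding single_colour_outside_def by auto
  moreover have "finite F"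
    using assms(1,2) by (rule finite_subset[rotated])
  ultimately show ?thesis
    by (simp add: card_image inj_on_single_colour_outside)
qed

lemma card_Diff_le_one_if_inj_on_single_colour_outside:
  assumes "inj_on (single_colour_outside F) M"
  shows "card (M - F) \<le> 1"
proof -
  have "single_colour_outside F e = 0" if "e \<in> M - F" for e
    using that unfolding single_colour_outside_def by simp
  then have "\<forall>x\<in>M - F. \<forall>y\<in>M - F. x = y"
    using assms by (metis Diff_subset inj_on_def subsetD)
  then show ?thesis
    by (cases "finite (M - F)") (auto simp: card_le_Suc0_iff_eq)
qed

lemma no_rainbow_kmatching_single_colour_outside:
  assumes "\<not> has_kmatching (k - 1) F"
  shows "\<not> has_rainbow_kmatching m n k (single_colour_outside F)"
proof
  assume "has_rainbow_kmatching m n k (single_colour_outside F)"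
  then obtain M where M: "M \<subseteq> Kmn_edges m n" "card M = k" "is_matching M"
      "inj_on (single_colour_outside F) M"
    unfolding has_rainbow_kmatching_def by blast
  have "finite M"
    using M(1) finite_Kmn_edges finite_subset by blast
  then have "card M = card (M \<inter> F) + card (M - F)"
    by (rule card_Int_Diff)
  then have "k - 1 \<le> card (M \<inter> F)"
    using M(2) card_Diff_le_one_if_inj_on_single_colour_outside[OF M(4)] by linarith
  then obtain N where "N \<subseteq> M \<inter> F" "card N = k - 1"
    by (meson obtain_subset_with_card_n)
  with M(3) have "has_kmatching (k - 1) F"
    unfolding has_kmatching_def by (meson is_matching_subset le_inf_iff)
  with assms show False ..
qed

lemma rb_matching_spec:
  assumes "rb_matching m n k \<le> card (c ` Kmn_edges m n)"
  shows "has_rainbow_kmatching m n k c"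
proof -
  let ?P = "\<lambda>r. \<forall>c :: nat \<times> nat \<Rightarrow> nat.
      r \<le> card (c ` Kmn_edges m n) \<longrightarrow> has_rainbow_kmatching m n k c"
  have "?P (Suc (card (Kmn_edges m n)))"
    using card_image_le[OF finite_Kmn_edges] not_less_eq_eq by blast
  then have "?P (rb_matching m n k)"
    unfolding rb_matching_def by (rule LeastI)
  with assms show ?thesis
    by blast
qed

lemma rb_matching_le:
  assumes "\<And>c. r \<le> card (c ` Kmn_edges m n) \<Longrightarrow> has_rainbow_kmatching m n k c"
  shows "rb_matching m n k \<le> r"
  unfolding rb_matching_def using assms by (intro Least_le) blast

lemma card_colours_less_rb_matching:
  "\<not> has_rainbow_kmatching m n k c \<Longrightarrow> card (c ` Kmn_edges m n) < rb_matching m n k"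
  using rb_matching_spec not_less by blast

theorem mainTheorem3:
  fixes m n k :: nat
  assumes "n \<le> m" and "2 \<le> k" and "k \<le> n"
  shows "ext_matching m n (k - 1) + 2 \<le> rb_matching m n k
       \<and> rb_matching m n k \<le> ext_matching m n k + 1"
proof
  have "1 \<le> k - 1"
    using assms(2) by simp
  then obtain F where F: "F \<subseteq> Kmn_edges m n" "\<not> has_kmatching (k - 1) F"
      "card F = ext_matching m n (k - 1)"
    by (rule ext_matching_attained)
  have "F \<noteq> Kmn_edges m n"
    using F(2) has_kmatching_Kmn_edges[of "k - 1" m n] assms by auto
  then have "card (single_colour_outside F ` Kmn_edges m n) = ext_matching m n (k - 1) + 1"
    using card_image_single_colour_outside[OF finite_Kmn_edges F(1)] F(3) by simp
  then show "ext_matching m n (k - 1) + 2 \<le> rb_matching m n k"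
    using card_colours_less_rb_matching[OF no_rainbow_kmatching_single_colour_outside[OF F(2)],
        of m n]
    by simp
  show "rb_matching m n k \<le> ext_matching m n k + 1"
    using has_rainbow_kmatching_if_many_colours by (intro rb_matching_le) simp
qed

end
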